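(* Suppose UE $i$ decodes $x_{A1}$ first (i.e., $i\overset{(1)}{\to}x_{A1}$). Then the rate region $\mathcal{R}_{1}(\mathcal{P}_{1})\cup\mathcal{R}_{2}(\mathcal{P}_{2})$ is achievable, where $$\mathcal{R}_{1}(\mathcal{P}_{1})=\bigcup_{\mathbf{p}\in\mathcal{P}_{1}}\Big\{\mathbf{r}\in\mathbb{R}_+^4 \;\Big|\; r_{i,1}\le C\Big(\tfrac{p_{i,1}}{p_{i,2}+p_{j,2}+\alpha_{i}}\Big),\; r_{i,2}\le C\Big(\tfrac{p_{i,2}}{\alpha_{i}}\Big),\; r_{j,s}\le C\Big(\tfrac{p_{j,s}}{p_{i,2}+\alpha_{j}}\Big)\ (s=1,2),\; r_{j,1}+r_{j,2}\le C\Big(\tfrac{p_{j,1}+p_{j,2}}{p_{i,2}+\alpha_{j}}\Big)\Big\},$$ $$\mathcal{R}_{2}(\mathcal{P}_{2})=\bigcup_{\mathbf{p}\in\mathcal{P}_{2}}\Big\{\mathbf{r}\in\mathbb{R}_+^4 \;\Big|\; r_{i,1}\le C\Big(\tfrac{p_{i,1}}{p_{i,2}+p_{j,2}+\alpha_{i}}\Big),\; r_{i,2}\le C\Big(\tfrac{p_{i,2}}{p_{j,2}+\alpha_{i}}\Big),\; r_{j,1}\le C\Big(\tfrac{p_{j,1}}{\alpha_{j}}\Big),\; r_{j,2}\le C\Big(\tfrac{p_{j,2}}{p_{i,2}+p_{j,1}+\alpha_{j}}\Big)\Big\},$$ with $\mathcal{P}_{1}=\mathcal{P}$ and $\mathcal{P}_{2}=\{\mathbf{p}\in\mathcal{P}\mid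 p_{j,2}-p_{j,1}>\alpha_{j}-\alpha_{i}\}$. The region $\mathcal{R}_{1}(\mathcal{P}_{1})$ is achieved by the decoding orders $i\overset{(1)}{\to}x_{A1}\overset{(2)}{\to}x_{B2}\overset{(3)}{\to}x_{A2}$ and $j\overset{(1)}{\to}(x_{B1},x_{B2})$; the region $\mathcal{R}_{2}(\mathcal{P}_{2})$ is achieved by the decoding orders $i\overset{(1)}{\to}x_{A1}\overset{(2)}{\to}x_{A2}$ and $j\overset{(1)}{\to}x_{A2}\overset{(2)}{\to}x_{B2}\overset{(3)}{\to}x_{B1}$.
   Context: Two-user downlink with a single-antenna base station (BS) and user equipments UE $i$ and UE $j$. UE $i$ requests file $W_A$ and UE $j$ requests file $W_B$; each file $W_f$ is split into subfiles, and the BS transmits four independent unit-power Gaussian codewords $x_{A1},x_{A2}$ (intended for UE $i$) and $x_{B1},x_{B2}$ (intended for UE $j$) with transmit powers $p_{i,1},p_{i,2},p_{j,1},p_{j,2}\ge 0$, i.e. $x=\sqrt{p_{i,1}}x_{A1}+\sqrt{p_{i,2}}x_{A2}+\sqrt{p_{j,1}}x_{B1}+\sqrt{p_{j,2}}x_{B2}$. Power vector $\mathbf{p}=(p_{i,1},p_{i,2},p_{j,1},p_{j,2})$, feasible set $\mathcal{P}=\{\mathbf{p}\in\mathbb{R}_+^4\mid p_{i,1}+p_{i,2}+p_{j,1}+p_{j,2}\le P\}$ for a total power budget $P>0$. UE $k$ receives $y_k=h_kx+z_k$ with $z_k\sim\mathcal{CN}(0,\sigma_k^2)$; the effective noise variance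 is $\alpha_k=\sigma_k^2/|h_k|^2$, and it is assumed $0<\alpha_i<\alpha_j$. Because UE $j$ has cached the data carried by $x_{A1}$ and UE $i$ has cached the data carried by $x_{B1}$, these are removed by cache-enabled interference cancellation, so the effective received signals (after normalizing by $h_k$) are: at UE $i$, $\sqrt{p_{i,1}}x_{A1}+\sqrt{p_{i,2}}x_{A2}+\sqrt{p_{j,2}}x_{B2}$ plus Gaussian noise of variance $\alpha_i$; at UE $j$, $\sqrt{p_{i,2}}x_{A2}+\sqrt{p_{j,1}}x_{B1}+\sqrt{p_{j,2}}x_{B2}$ plus Gaussian noise of variance $\alpha_j$. $C(\Gamma)=\log_2(1+\Gamma)$. Rate vector $\mathbf{r}=(r_{i,1},r_{i,2},r_{j,1},r_{j,2})$, where $r_{i,s}$ is the rate of $x_{As}$ and $r_{j,s}$ the rate of $x_{Bs}$. Receivers perform successive interference cancellation (SIC): signals are decoded in steps, each decoded signal being subtracted before later steps and undecoded signals treated as Gaussian noise; several signals may be jointly decoded in one step (multiple-access decoding). A signal intended for the other user may be decoded and cancelled only if its rate is supported at that decoding step at the decoding user. Notation: $k\overset{(n)}{\to}x_f$ means $x_f$ is the $n$-th decoded signal at UE $k$; $k\overset{(n)}{\to}(x_f,x_{f'})$ means $x_f,x_{f'}$ are jointly decoded in the $n$-th step. A rate vector is achievable if there is a power vector in the indicated set and decoding orders under which all intended signals (and all cancelled interfering signals) are decoded reliably at those rates. *)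

theory Defs
  imports Complex_Main
begin

datatype sig = A1 | A2 | B1 | B2
datatype ue = UEi | UEj

text \<open>Power vector p and rate vector r are functions on the four signals:
  p A1 = p_{i,1}, p A2 = p_{i,2}, p B1 = p_{j,1}, p B2 = p_{j,2}; similarly r.\<close>

definition Cap :: "real \<Rightarrow> real" where
  "Cap g = log 2 (1 + g)"

definition alpha :: "real \<Rightarrow> real \<Rightarrow> ue \<Rightarrow> real" where
  "alpha ai aj k = (case k of UEi \<Rightarrow> ai | UEj \<Rightarrow> aj)"

text \<open>Signals present at each UE after cache-enabled interference cancellation.\<close>
definition present :: "ue \<Rightarrow> sig set" where
  "present k = (case k of UEi \<Rightarrow> {A1, A2, B2} | UEj \<Rightarrow> {A2, B1, B2})"

definition intended :: "ue \<Rightarrow> sig set" where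
  "intended k = (case k of UEi \<Rightarrow> {A1, A2} | UEj \<Rightarrow> {B1, B2})"

definition feasible_powers :: "real \<Rightarrow> (sig \<Rightarrow> real) set" where
  "feasible_powers Pt = {p. (\<forall>s. p s \<ge> 0) \<and> p A1 + p A2 + p B1 + p B2 \<le> Pt}"

text \<open>A SIC decoding order at a UE is a list of decoding steps; each step is the
  (nonempty) set of signals jointly decoded in that step.\<close>
definition valid_order :: "ue \<Rightarrow> sig set list \<Rightarrow> bool" where
  "valid_order k ord \<longleftrightarrow>
     (\<forall>S\<in>set ord. S \<noteq> {} \<and> S \<subseteq> present k) \<and>
     (\<forall>m<length ord. \<forall>n<length ord. m \<noteq> n \<longrightarrow> ord ! m \<inter> ord ! n = {}) \<and>
     intended k \<subseteq> \<Union> (set ord)"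

text \<open>Step n is reliable: the signals jointly decoded in step n satisfy the
  multiple-access constraints, with previously decoded signals cancelled and all
  still undecoded signals treated as Gaussian noise.\<close>
definition step_ok :: "real \<Rightarrow> real \<Rightarrow> ue \<Rightarrow> (sig \<Rightarrow> real) \<Rightarrow> (sig \<Rightarrow> real)
    \<Rightarrow> sig set list \<Rightarrow> nat \<Rightarrow> bool" where
  "step_ok ai aj k p r ord n \<longleftrightarrow>
     (let S = ord ! n;
          U = present k - \<Union> (set (take (Suc n) ord))
      in \<forall>T. T \<subseteq> S \<and> T \<noteq> {} \<longrightarrow>
             (\<Sum>s\<in>T. r s) \<le> Cap ((\<Sum>s\<in>T. p s) / ((\<Sum>s\<in>U. p s) + alpha ai aj k)))"

definition decodable :: "real \<Rightarrow> real \<Rightarrow> ue \<Rightarrow> (sig \<Rightarrow> real) \<Rightarrow> (sig \<Rightarrow> real)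
    \<Rightarrow> sig set list \<Rightarrow> bool" where
  "decodable ai aj k p r ord \<longleftrightarrow>
     valid_order k ord \<and> (\<forall>n<length ord. step_ok ai aj k p r ord n)"

definition achievable_A1_first :: "real \<Rightarrow> real \<Rightarrow> (sig \<Rightarrow> real) set \<Rightarrow> (sig \<Rightarrow> real) \<Rightarrow> bool" where
  "achievable_A1_first ai aj Ps r \<longleftrightarrow>
     (\<exists>p\<in>Ps. \<exists>oi oj. oi \<noteq> [] \<and> hd oi = {A1} \<and>
        decodable ai aj UEi p r oi \<and> decodable ai aj UEj p r oj)"

definition nonneg_rates :: "(sig \<Rightarrow> real) \<Rightarrow> bool" where
  "nonneg_rates r \<longleftrightarrow> (\<forall>s. r s \<ge> 0)"

definition R1_at :: "real \<Rightarrow> real \<Rightarrow> (sig \<Rightarrow> real) \<Rightarrow> (sig \<Rightarrow> real) set" where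
  "R1_at ai aj p = {r. nonneg_rates r \<and>
     r A1 \<le> Cap (p A1 / (p A2 + p B2 + ai)) \<and>
     r A2 \<le> Cap (p A2 / ai) \<and>
     r B1 \<le> Cap (p B1 / (p A2 + aj)) \<and>
     r B2 \<le> Cap (p B2 / (p A2 + aj)) \<and>
     r B1 + r B2 \<le> Cap ((p B1 + p B2) / (p A2 + aj))}"

definition R2_at :: "real \<Rightarrow> real \<Rightarrow> (sig \<Rightarrow> real) \<Rightarrow> (sig \<Rightarrow> real) set" where
  "R2_at ai aj p = {r. nonneg_rates r \<and>
     r A1 \<le> Cap (p A1 / (p A2 + p B2 + ai)) \<and>
     r A2 \<le> Cap (p A2 / (p B2 + ai)) \<and>
     r B1 \<le> Cap (p B1 / aj) \<and>
     r B2 \<le> Cap (p B2 / (p A2 + p B1 + aj))}"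

definition P1 :: "real \<Rightarrow> (sig \<Rightarrow> real) set" where
  "P1 Pt = feasible_powers Pt"

definition P2 :: "real \<Rightarrow> real \<Rightarrow> real \<Rightarrow> (sig \<Rightarrow> real) set" where
  "P2 ai aj Pt = {p \<in> feasible_powers Pt. p B2 - p B1 > aj - ai}"

definition region :: "((sig \<Rightarrow> real) \<Rightarrow> (sig \<Rightarrow> real) set) \<Rightarrow> (sig \<Rightarrow> real) set
    \<Rightarrow> (sig \<Rightarrow> real) set" where
  "region R Ps = (\<Union>p\<in>Ps. R p)"

end

theory Submission
  imports Defs
begin

text \<open>Each decoding order turns decodability into a short list of capacity bounds, one per
  SIC step (three for the joint step), read off from the signals still undecoded. For
  \<open>R1_at\<close> the only bound not appearing in the region is that UE i, the stronger user,
  decodes \<open>x_B2\<close> against noise \<open>p A2 + ai \<le> p A2 + aj\<close>; for \<open>R2_at\<close> it is that UE j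
  decodes \<open>x_A2\<close> against noise \<open>p B1 + aj\<close>, which the power gap defining \<open>P2\<close> makes at
  most the noise \<open>p B2 + ai\<close> seen at UE i. Capacity is monotone, so both follow.\<close>

lemma Cap_mono: "0 \<le> x \<Longrightarrow> x \<le> y \<Longrightarrow> Cap x \<le> Cap y"
  unfolding Cap_def by simp

lemma step_ok_singleton:
  assumes "ord ! n = {s}"
  shows "step_ok ai aj k p r ord n \<longleftrightarrow>
    r s \<le> Cap (p s / ((\<Sum>t \<in> present k - \<Union> (set (take (Suc n) ord)). p t) + alpha ai aj k))"
proof -
  have "T \<subseteq> {s} \<and> T \<noteq> {} \<longleftrightarrow> T = {s}" for T :: "sig set" by auto
  then show ?thesis using assms unfolding step_ok_def Let_def by simp
qed

lemma step_ok_pair: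
  assumes "ord ! n = {s, t}" and "s \<noteq> t"
  shows "step_ok ai aj k p r ord n \<longleftrightarrow>
    (let N = (\<Sum>u \<in> present k - \<Union> (set (take (Suc n) ord)). p u) + alpha ai aj k in
      r s \<le> Cap (p s / N) \<and> r t \<le> Cap (p t / N) \<and> r s + r t \<le> Cap ((p s + p t) / N))"
proof -
  have "T \<subseteq> {s, t} \<and> T \<noteq> {} \<longleftrightarrow> T = {s} \<or> T = {t} \<or> T = {s, t}" for T :: "sig set" by auto
  then show ?thesis using assms unfolding step_ok_def Let_def by auto
qed

lemma decodable_UEi_A1_B2_A2:
  "decodable ai aj UEi p r [{A1}, {B2}, {A2}] \<longleftrightarrow>
     r A1 \<le> Cap (p A1 / (p A2 + p B2 + ai)) \<and> r B2 \<le> Cap (p B2 / (p A2 + ai)) \<and>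
     r A2 \<le> Cap (p A2 / ai)"
  by (simp add: decodable_def valid_order_def present_def intended_def All_less_Suc numeral_eq_Suc
      step_ok_singleton alpha_def insert_Diff_if ac_simps nth_Cons split: nat.splits)

lemma decodable_UEj_B1B2:
  "decodable ai aj UEj p r [{B1, B2}] \<longleftrightarrow>
     r B1 \<le> Cap (p B1 / (p A2 + aj)) \<and> r B2 \<le> Cap (p B2 / (p A2 + aj)) \<and>
     r B1 + r B2 \<le> Cap ((p B1 + p B2) / (p A2 + aj))"
  by (simp add: decodable_def valid_order_def present_def intended_def
      step_ok_pair alpha_def insert_Diff_if Let_def ac_simps)

lemma decodable_UEi_A1_A2:
  "decodable ai aj UEi p r [{A1}, {A2}] \<longleftrightarrow>
     r A1 \<le> Cap (p A1 / (p A2 + p B2 + ai)) \<and> r A2 \<le> Cap (p A2 / (p B2 + ai))"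
  by (simp add: decodable_def valid_order_def present_def intended_def All_less_Suc numeral_eq_Suc
      step_ok_singleton alpha_def insert_Diff_if ac_simps nth_Cons split: nat.splits)

lemma decodable_UEj_B2_A2_B1:
  "decodable ai aj UEj p r [{B2}, {A2}, {B1}] \<longleftrightarrow>
     r B2 \<le> Cap (p B2 / (p A2 + p B1 + aj)) \<and> r A2 \<le> Cap (p A2 / (p B1 + aj)) \<and>
     r B1 \<le> Cap (p B1 / aj)"
  by (simp add: decodable_def valid_order_def present_def intended_def All_less_Suc numeral_eq_Suc
      step_ok_singleton alpha_def insert_Diff_if ac_simps nth_Cons split: nat.splits)

lemma R1_at_decodable:
  assumes "0 < ai" and "ai \<le> aj" and "\<forall>s. p s \<ge> 0" and "r \<in> R1_at ai aj p"
  shows "decodable ai aj UEi p r [{A1}, {B2}, {A2}] \<and> decodable ai aj UEj p r [{B1, B2}]"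
proof -
  have "0 < p A2 + ai" and "p A2 + ai \<le> p A2 + aj"
    using assms(1-3) by (auto intro: add_nonneg_pos)
  then have "p B2 / (p A2 + aj) \<le> p B2 / (p A2 + ai)"
    using assms(3) by (intro divide_left_mono) auto
  then have "Cap (p B2 / (p A2 + aj)) \<le> Cap (p B2 / (p A2 + ai))"
    using assms(1-3) by (intro Cap_mono) auto
  then show ?thesis
    using assms(4) by (auto simp: R1_at_def decodable_UEi_A1_B2_A2 decodable_UEj_B1B2)
qed

lemma R2_at_decodable:
  assumes "0 < ai" and "0 < aj" and "p B2 - p B1 > aj - ai" and "\<forall>s. p s \<ge> 0"
    and "r \<in> R2_at ai aj p"
  shows "decodable ai aj UEi p r [{A1}, {A2}] \<and> decodable ai aj UEj p r [{B2}, {A2}, {B1}]"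
proof -
  have "0 < p B1 + aj" and "p B1 + aj \<le> p B2 + ai"
    using assms(2-4) by (auto intro: add_nonneg_pos)
  then have "p A2 / (p B2 + ai) \<le> p A2 / (p B1 + aj)"
    using assms(4) by (intro divide_left_mono) auto
  then have "Cap (p A2 / (p B2 + ai)) \<le> Cap (p A2 / (p B1 + aj))"
    using assms(1,4) by (intro Cap_mono) auto
  then show ?thesis
    using assms(5) by (auto simp: R2_at_def decodable_UEi_A1_A2 decodable_UEj_B2_A2_B1)
qed

lemma achievable_A1_firstI:
  assumes "p \<in> Ps" and "decodable ai aj UEi p r ({A1} # oi)" and "decodable ai aj UEj p r oj"
  shows "achievable_A1_first ai aj Ps r"
  using assms unfolding achievable_A1_first_def
  by (intro bexI[of _ p] exI[of _ "{A1} # oi"] exI[of _ oj]) auto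

theorem proposition1:
  fixes ai aj Pt :: real
  assumes "0 < ai" and "ai < aj" and "0 < Pt"
  shows "(\<forall>r \<in> region (R1_at ai aj) (P1 Pt) \<union> region (R2_at ai aj) (P2 ai aj Pt).
            achievable_A1_first ai aj (feasible_powers Pt) r)
       \<and> (\<forall>p \<in> P1 Pt. \<forall>r \<in> R1_at ai aj p.
            decodable ai aj UEi p r [{A1}, {B2}, {A2}] \<and>
            decodable ai aj UEj p r [{B1, B2}])
       \<and> (\<forall>p \<in> P2 ai aj Pt. \<forall>r \<in> R2_at ai aj p.
            decodable ai aj UEi p r [{A1}, {A2}] \<and>
            decodable ai aj UEj p r [{B2}, {A2}, {B1}])"
proof -
  have R1: "decodable ai aj UEi p r [{A1}, {B2}, {A2}] \<and> decodable ai aj UEj p r [{B1, B2}]"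
    if "p \<in> P1 Pt" and "r \<in> R1_at ai aj p" for p r
    using that assms(1,2) by (intro R1_at_decodable) (auto simp: P1_def feasible_powers_def)
  have R2: "decodable ai aj UEi p r [{A1}, {A2}] \<and> decodable ai aj UEj p r [{B2}, {A2}, {B1}]"
    if "p \<in> P2 ai aj Pt" and "r \<in> R2_at ai aj p" for p r
    using that assms(1,2) by (intro R2_at_decodable) (auto simp: P2_def feasible_powers_def)
  have "achievable_A1_first ai aj (feasible_powers Pt) r"
    if "r \<in> region (R1_at ai aj) (P1 Pt) \<union> region (R2_at ai aj) (P2 ai aj Pt)" for r
    using that R1 R2 unfolding region_def P1_def P2_def
    by (blast intro: achievable_A1_firstI)
  with R1 R2 show ?thesis by blast
qed

end
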